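(* For any finite multiset of items $I$, any item $i\in I$, and any finite sequence of bins $\sigma$, if $p$ is a valid packing of $I$ into $\sigma$, then there is a valid packing of $I\setminus\{i\}$ into $\sigma$ that uses a subset of the bins used by $p$.
   Context: Grid Scheduling setting: items have positive integer sizes; bins have positive integer sizes and form a sequence $\sigma=\langle b_1,\dots,b_m\rangle$. A partial packing assigns some items to bins such that the total size of the items in each bin is at most the bin's size; a packing assigns every item. A bin is used if it receives at least one item. A (partial) packing is valid if each empty bin is smaller than every unpacked item and smaller than every item packed in a bin occurring later in the sequence. *)

theory Defs
  imports Main
begin

text \<open>Items are elements of a finite set I of item identifiers (so that equal-sized
items are distinguishable, as in a multiset), with size function s.
Bins form a list sigma; bin j (0-indexed) has size sigma ! j.
A partial packing assigns some items to bin indices (None = unpacked).\<close>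

definition partial_packing :: "('a \<Rightarrow> nat) \<Rightarrow> 'a set \<Rightarrow> nat list \<Rightarrow> ('a \<Rightarrow> nat option) \<Rightarrow> bool" where
  "partial_packing s I \<sigma> p \<longleftrightarrow>
     (\<forall>x\<in>I. \<forall>j. p x = Some j \<longrightarrow> j < length \<sigma>) \<and>
     (\<forall>j<length \<sigma>. (\<Sum>x\<in>{x\<in>I. p x = Some j}. s x) \<le> \<sigma> ! j)"

definition packing :: "('a \<Rightarrow> nat) \<Rightarrow> 'a set \<Rightarrow> nat list \<Rightarrow> ('a \<Rightarrow> nat option) \<Rightarrow> bool" where
  "packing s I \<sigma> p \<longleftrightarrow> partial_packing s I \<sigma> p \<and> (\<forall>x\<in>I. p x \<noteq> None)"

definition used_bins :: "'a set \<Rightarrow> ('a \<Rightarrow> nat option) \<Rightarrow> nat set" where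
  "used_bins I p = {j. \<exists>x\<in>I. p x = Some j}"

definition valid :: "('a \<Rightarrow> nat) \<Rightarrow> 'a set \<Rightarrow> nat list \<Rightarrow> ('a \<Rightarrow> nat option) \<Rightarrow> bool" where
  "valid s I \<sigma> p \<longleftrightarrow>
     (\<forall>j<length \<sigma>. j \<notin> used_bins I p \<longrightarrow>
        (\<forall>x\<in>I. p x = None \<longrightarrow> \<sigma> ! j < s x) \<and>
        (\<forall>x\<in>I. \<forall>k. p x = Some k \<and> j < k \<longrightarrow> \<sigma> ! j < s x))"

definition valid_packing :: "('a \<Rightarrow> nat) \<Rightarrow> 'a set \<Rightarrow> nat list \<Rightarrow> ('a \<Rightarrow> nat option) \<Rightarrow> bool" where
  "valid_packing s I \<sigma> p \<longleftrightarrow> packing s I \<sigma> p \<and> valid s I \<sigma> p"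

end

theory Submission
  imports Defs
begin

(* Removing items from a valid packing need not keep it valid: an emptied bin may now
   be large enough for an item packed further along the sequence.  We repair this by an
   extremal argument that works for every subset J of the items, not only for I - {i}.
   Call a packing q of J "dominated" by p if it places every item in a bin no later
   than p does and uses only bins that p uses.  The restriction of p to J is dominated,
   so there is a dominated packing q minimising the total bin index.  If q were not
   valid, some item x sits in a bin k after an empty bin j < k into which it fits; since
   j lies before p's bin for x and p is valid, j is used by p, so moving x to j yields
   a dominated packing with smaller total index, a contradiction. *)

text \<open>Dropping items from a partial packing can only lower each bin's load.\<close>

lemma partial_packing_subset:
  assumes "partial_packing s I \<sigma> p" and "finite I" and "J \<subseteq> I"
  shows "partial_packing s J \<sigma> p"
  unfolding partial_packing_def
proof (intro conjI allI impI ballI)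
  fix x j assume "x \<in> J" "p x = Some j"
  then show "j < length \<sigma>" using assms(1,3) unfolding partial_packing_def by blast
next
  fix j assume j: "j < length \<sigma>"
  have "(\<Sum>x\<in>{x\<in>J. p x = Some j}. s x) \<le> (\<Sum>x\<in>{x\<in>I. p x = Some j}. s x)"
    using assms(2,3) by (auto intro!: sum_mono2)
  also have "\<dots> \<le> \<sigma> ! j" using assms(1) j unfolding partial_packing_def by blast
  finally show "(\<Sum>x\<in>{x\<in>J. p x = Some j}. s x) \<le> \<sigma> ! j" .
qed

lemma packing_subset:
  assumes "packing s I \<sigma> p" and "finite I" and "J \<subseteq> I"
  shows "packing s J \<sigma> p"
  using assms partial_packing_subset unfolding packing_def by blast

lemma packing_move_to_empty_bin:
  assumes q: "packing s J \<sigma> q" and "finite J" and "x \<in> J"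
    and j: "j < length \<sigma>" "j \<notin> used_bins J q" and fits: "s x \<le> \<sigma> ! j"
  shows "packing s J \<sigma> (q(x := Some j))"
  unfolding packing_def partial_packing_def
proof (intro conjI allI impI ballI)
  fix y j' assume "y \<in> J" "(q(x := Some j)) y = Some j'"
  then show "j' < length \<sigma>" using q j(1) unfolding packing_def partial_packing_def
    by (auto split: if_splits)
next
  fix j' assume j': "j' < length \<sigma>"
  show "(\<Sum>y\<in>{y\<in>J. (q(x := Some j)) y = Some j'}. s y) \<le> \<sigma> ! j'"
  proof (cases "j' = j")
    case True
    have "{y\<in>J. (q(x := Some j)) y = Some j} = {x}"
      using j(2) \<open>x \<in> J\<close> unfolding used_bins_def by auto
    then show ?thesis using True fits by simp
  next
    case False
    have "(\<Sum>y\<in>{y\<in>J. (q(x := Some j)) y = Some j'}. s y) \<le> (\<Sum>y\<in>{y\<in>J. q y = Some j'}. s y)"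
      using \<open>finite J\<close> False by (auto intro!: sum_mono2)
    also have "\<dots> \<le> \<sigma> ! j'" using q j' unfolding packing_def partial_packing_def by blast
    finally show ?thesis .
  qed
next
  fix y assume "y \<in> J"
  then show "(q(x := Some j)) y \<noteq> None" using q unfolding packing_def by auto
qed

definition index_sum :: "'a set \<Rightarrow> ('a \<Rightarrow> nat option) \<Rightarrow> nat" where
  "index_sum J q = (\<Sum>x\<in>J. the (q x))"

lemma index_sum_move_earlier:
  assumes "finite J" and "x \<in> J" and "q x = Some k" and "j < k"
  shows "index_sum J (q(x := Some j)) < index_sum J q"
proof -
  have rest: "(\<Sum>y\<in>J-{x}. the ((q(x := Some j)) y)) = (\<Sum>y\<in>J-{x}. the (q y))"
    by (rule sum.cong) auto
  have "index_sum J (q(x := Some j)) = j + (\<Sum>y\<in>J-{x}. the (q y))"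
    unfolding index_sum_def sum.remove[OF assms(1,2)] rest by simp
  also have "\<dots> < k + (\<Sum>y\<in>J-{x}. the (q y))" using assms(4) by simp
  also have "\<dots> = index_sum J q"
    unfolding index_sum_def sum.remove[OF assms(1,2)] using assms(3) by simp
  finally show ?thesis .
qed

definition dominated :: "('a \<Rightarrow> nat) \<Rightarrow> 'a set \<Rightarrow> 'a set \<Rightarrow> nat list
    \<Rightarrow> ('a \<Rightarrow> nat option) \<Rightarrow> ('a \<Rightarrow> nat option) \<Rightarrow> bool" where
  "dominated s I J \<sigma> p q \<longleftrightarrow>
     packing s J \<sigma> q \<and> (\<forall>x\<in>J. the (q x) \<le> the (p x)) \<and> used_bins J q \<subseteq> used_bins I p"

lemma dominated_self:
  assumes "packing s I \<sigma> p" and "finite I" and "J \<subseteq> I"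
  shows "dominated s I J \<sigma> p p"
  using assms packing_subset unfolding dominated_def used_bins_def by blast

lemma dominated_minimal_valid:
  assumes p: "valid_packing s I \<sigma> p" and "finite I" and "J \<subseteq> I"
    and q: "dominated s I J \<sigma> p q"
    and minimal: "\<And>q'. dominated s I J \<sigma> p q' \<Longrightarrow> index_sum J q \<le> index_sum J q'"
  shows "valid s J \<sigma> q"
  unfolding valid_def
proof (intro allI impI conjI ballI)
  have qpack: "packing s J \<sigma> q" using q unfolding dominated_def by blast
  fix j assume j: "j < length \<sigma>" "j \<notin> used_bins J q"
  {
    fix x assume "x \<in> J" "q x = None"
    then show "\<sigma> ! j < s x" using qpack unfolding packing_def by blast
  next
    fix x k assume x: "x \<in> J" and k: "q x = Some k \<and> j < k"
    show "\<sigma> ! j < s x"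
    proof (rule ccontr)
      assume "\<not> \<sigma> ! j < s x"
      then have fits: "s x \<le> \<sigma> ! j" by simp
      have "finite J" using \<open>finite I\<close> \<open>J \<subseteq> I\<close> finite_subset by blast
      obtain pk where pk: "p x = Some pk"
        using p x \<open>J \<subseteq> I\<close> unfolding valid_packing_def packing_def by blast
      have "k \<le> pk" using q x k pk unfolding dominated_def by force
      have j_used: "j \<in> used_bins I p"
      proof (rule ccontr)
        assume "j \<notin> used_bins I p"
        with p j(1) x \<open>J \<subseteq> I\<close> pk \<open>k \<le> pk\<close> k have "\<sigma> ! j < s x"
          unfolding valid_packing_def valid_def by (meson less_le_trans subsetD)
        with fits show False by simp
      qed
      let ?q' = "q(x := Some j)"
      have "dominated s I J \<sigma> p ?q'"
        unfolding dominated_def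
      proof (intro conjI)
        show "packing s J \<sigma> ?q'"
          using packing_move_to_empty_bin[OF qpack \<open>finite J\<close> x j fits] .
        show "\<forall>y\<in>J. the (?q' y) \<le> the (p y)"
          using q k pk \<open>k \<le> pk\<close> unfolding dominated_def by auto
        show "used_bins J ?q' \<subseteq> used_bins I p"
          using q j_used unfolding dominated_def used_bins_def by (auto split: if_splits)
      qed
      then have "index_sum J q \<le> index_sum J ?q'" by (rule minimal)
      moreover have "index_sum J ?q' < index_sum J q"
        using index_sum_move_earlier[OF \<open>finite J\<close> x] k by blast
      ultimately show False by simp
    qed
  }
qed

lemma valid_packing_subset:
  assumes p: "valid_packing s I \<sigma> p" and "finite I" and "J \<subseteq> I"
  shows "\<exists>q. valid_packing s J \<sigma> q \<and> used_bins J q \<subseteq> used_bins I p"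
proof -
  have "dominated s I J \<sigma> p p"
    using dominated_self p assms(2,3) unfolding valid_packing_def by blast
  then obtain q where q: "dominated s I J \<sigma> p q"
    and minimal: "\<And>q'. dominated s I J \<sigma> p q' \<Longrightarrow> index_sum J q \<le> index_sum J q'"
    using ex_has_least_nat[of "dominated s I J \<sigma> p" p "index_sum J"] by blast
  have "valid s J \<sigma> q" using dominated_minimal_valid[OF assms q minimal] .
  then show ?thesis using q unfolding dominated_def valid_packing_def by blast
qed

text \<open>The theorem is the case J = I - {i}.\<close>

theorem lemma1:
  fixes I :: "'a set" and s :: "'a \<Rightarrow> nat" and \<sigma> :: "nat list"
    and p :: "'a \<Rightarrow> nat option" and i :: 'a
  assumes "finite I"
    and "\<forall>x\<in>I. 0 < s x"
    and "\<forall>b\<in>set \<sigma>. 0 < b"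
    and "i \<in> I"
    and "valid_packing s I \<sigma> p"
  shows "\<exists>q. valid_packing s (I - {i}) \<sigma> q \<and> used_bins (I - {i}) q \<subseteq> used_bins I p"
  using valid_packing_subset[OF assms(5,1)] by blast

end
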